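(* The partially ordered set $(\mathcal{C}_{m,n},\le)$ is a lattice.
   Context: $\mathcal{C}_{m,n}$ is the set of all convex $m\times n$ $(0,1)$-matrices (matrices in which the 1's in every row and every column occur consecutively), and $\le$ is the entrywise partial order. *)

theory Defs
  imports Main
begin

text \<open>An m x n (0,1)-matrix is represented as a function nat => nat => bool
  (True = entry 1) whose entries vanish outside the index range {0..<m} x {0..<n}.\<close>

type_synonym bmat = "nat \<Rightarrow> nat \<Rightarrow> bool"

definition convex_matrices :: "nat \<Rightarrow> nat \<Rightarrow> bmat set" where
  "convex_matrices m n = {A.
     (\<forall>i j. A i j \<longrightarrow> i < m \<and> j < n) \<and>
     (\<forall>i j1 j2 j. A i j1 \<and> A i j2 \<and> j1 \<le> j \<and> j \<le> j2 \<longrightarrow> A i j) \<and>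
     (\<forall>j i1 i2 i. A i1 j \<and> A i2 j \<and> i1 \<le> i \<and> i \<le> i2 \<longrightarrow> A i j)}"

definition mat_le :: "bmat \<Rightarrow> bmat \<Rightarrow> bool" where
  "mat_le A B \<longleftrightarrow> (\<forall>i j. A i j \<longrightarrow> B i j)"

definition is_lub_in :: "bmat set \<Rightarrow> bmat \<Rightarrow> bmat \<Rightarrow> bmat \<Rightarrow> bool" where
  "is_lub_in S A B J \<longleftrightarrow> J \<in> S \<and> mat_le A J \<and> mat_le B J \<and>
     (\<forall>U\<in>S. mat_le A U \<and> mat_le B U \<longrightarrow> mat_le J U)"

definition is_glb_in :: "bmat set \<Rightarrow> bmat \<Rightarrow> bmat \<Rightarrow> bmat \<Rightarrow> bool" where
  "is_glb_in S A B M \<longleftrightarrow> M \<in> S \<and> mat_le M A \<and> mat_le M B \<and>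
     (\<forall>L\<in>S. mat_le L A \<and> mat_le L B \<longrightarrow> mat_le L M)"

end

theory Submission
  imports Defs
begin

text \<open>Inside the complete lattice of all (0,1)-matrices, convexity of rows and columns
  survives arbitrary nonempty intersections, and the all-ones m x n matrix is convex and lies
  above every convex m x n matrix. Hence the meet of two convex matrices is their entrywise
  minimum, and their join is the intersection of all their convex upper bounds, a nonempty
  family because it contains the all-ones matrix.\<close>

lemma mat_le_iff_le: "mat_le A B \<longleftrightarrow> A \<le> B"
  unfolding mat_le_def le_fun_def le_bool_def by blast

lemma Inf_bmat_apply: "(Inf S :: bmat) i j \<longleftrightarrow> (\<forall>U\<in>S. U i j)"
  by (simp add: Inf_fun_def)

lemma convex_matricesI:
  assumes "\<And>i j. A i j \<Longrightarrow> i < m \<and> j < n"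
    and "\<And>i j1 j2 j. A i j1 \<Longrightarrow> A i j2 \<Longrightarrow> j1 \<le> j \<Longrightarrow> j \<le> j2 \<Longrightarrow> A i j"
    and "\<And>j i1 i2 i. A i1 j \<Longrightarrow> A i2 j \<Longrightarrow> i1 \<le> i \<Longrightarrow> i \<le> i2 \<Longrightarrow> A i j"
  shows "A \<in> convex_matrices m n"
  using assms unfolding convex_matrices_def by blast

lemma convex_matricesD:
  assumes "A \<in> convex_matrices m n"
  shows "\<And>i j. A i j \<Longrightarrow> i < m \<and> j < n"
    and "\<And>i j1 j2 j. A i j1 \<Longrightarrow> A i j2 \<Longrightarrow> j1 \<le> j \<Longrightarrow> j \<le> j2 \<Longrightarrow> A i j"
    and "\<And>j i1 i2 i. A i1 j \<Longrightarrow> A i2 j \<Longrightarrow> i1 \<le> i \<Longrightarrow> i \<le> i2 \<Longrightarrow> A i j"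
  using assms unfolding convex_matrices_def mem_Collect_eq by blast+

lemma Inf_in_convex_matrices:
  assumes S: "S \<subseteq> convex_matrices m n" and "S \<noteq> {}"
  shows "Inf S \<in> convex_matrices m n"
proof (rule convex_matricesI; unfold Inf_bmat_apply)
  obtain A where A: "A \<in> S" using \<open>S \<noteq> {}\<close> by blast
  fix i j assume "\<forall>U\<in>S. U i j"
  with A have "A i j" by blast
  with A S show "i < m \<and> j < n" by (blast dest: convex_matricesD(1))
next
  fix i j1 j2 j assume "\<forall>U\<in>S. U i j1" "\<forall>U\<in>S. U i j2" "j1 \<le> j" "j \<le> j2"
  with S show "\<forall>U\<in>S. U i j" by (blast intro: convex_matricesD(2))
next
  fix j i1 i2 i assume "\<forall>U\<in>S. U i1 j" "\<forall>U\<in>S. U i2 j" "i1 \<le> i" "i \<le> i2"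
  with S show "\<forall>U\<in>S. U i j" by (blast intro: convex_matricesD(3))
qed

lemma ones_in_convex_matrices: "(\<lambda>i j. i < m \<and> j < n) \<in> convex_matrices m n"
  by (rule convex_matricesI) auto

lemma le_ones_if_in_convex_matrices:
  "A \<in> convex_matrices m n \<Longrightarrow> A \<le> (\<lambda>i j. i < m \<and> j < n)"
  by (auto simp: le_fun_def dest: convex_matricesD(1))

lemma convex_matrices_has_glb:
  assumes "A \<in> convex_matrices m n" and "B \<in> convex_matrices m n"
  shows "is_glb_in (convex_matrices m n) A B (Inf {A, B})"
  using assms Inf_in_convex_matrices[of "{A, B}"]
  unfolding is_glb_in_def mat_le_iff_le by (simp add: le_infI1 le_infI2)

lemma convex_matrices_has_lub:
  assumes "A \<in> convex_matrices m n" and "B \<in> convex_matrices m n"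
  defines "U \<equiv> {C \<in> convex_matrices m n. A \<le> C \<and> B \<le> C}"
  shows "is_lub_in (convex_matrices m n) A B (Inf U)"
proof -
  have "(\<lambda>i j. i < m \<and> j < n) \<in> U"
    using assms ones_in_convex_matrices le_ones_if_in_convex_matrices by simp
  then have "Inf U \<in> convex_matrices m n"
    by (intro Inf_in_convex_matrices) (auto simp: U_def)
  then show ?thesis
    unfolding is_lub_in_def mat_le_iff_le U_def by (auto intro: Inf_greatest Inf_lower)
qed

theorem mainTheorem12:
  fixes m n :: nat
  shows "\<forall>A\<in>convex_matrices m n. \<forall>B\<in>convex_matrices m n.
           (\<exists>J. is_lub_in (convex_matrices m n) A B J) \<and>
           (\<exists>M. is_glb_in (convex_matrices m n) A B M)"
  using convex_matrices_has_lub convex_matrices_has_glb by blast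

end
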